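(* The variety $\mathsf{V}(S_{(4,411)})$ is the ai-semiring variety defined by the identities $xy\approx xy+x$, $x+yx\approx x+yx+xy$, $x_1x_2x_3\approx x_1x_2x_3+x_4$, $x_1x_2+x_3x_4\approx x_1x_2+x_3x_4+x_1x_3$, $x_1x_2+x_3x_4\approx x_1x_2+x_3x_4+x_1x_4$.
   Context: An ai-semiring is an algebra $(S,+,\cdot)$ with $(S,+)$ a semilattice, $(S,\cdot)$ a semigroup, and both distributive laws. $\mathsf{V}(S)$ is the variety generated by $S$; "the ai-semiring variety defined by identities $\Sigma$" is the class of all ai-semirings satisfying $\Sigma$. $S_{(4,411)}$ has carrier $\{1,2,3,4\}$; addition: $x+x=x$, $2+x=x$, $1+x=1$ for all $x$, $3+4=1$; multiplication (row $a$, column $b$ gives $a\cdot b$): row $1$: $1,1,1,1$; row $2$: $1,3,1,3$; row $3$: $1,1,1,1$; row $4$: $1,1,1,1$. *)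

theory Defs
  imports Main
begin

definition ai_semiring :: "('a \<Rightarrow> 'a \<Rightarrow> 'a) \<Rightarrow> ('a \<Rightarrow> 'a \<Rightarrow> 'a) \<Rightarrow> bool" where
  "ai_semiring add mul \<longleftrightarrow>
     (\<forall>x y z. add (add x y) z = add x (add y z)) \<and>
     (\<forall>x y. add x y = add y x) \<and>
     (\<forall>x. add x x = x) \<and>
     (\<forall>x y z. mul (mul x y) z = mul x (mul y z)) \<and>
     (\<forall>x y z. mul x (add y z) = add (mul x y) (mul x z)) \<and>
     (\<forall>x y z. mul (add x y) z = add (mul x z) (mul y z))"

datatype sterm = Var nat | Plus sterm sterm | Times sterm sterm

fun eval :: "('a \<Rightarrow> 'a \<Rightarrow> 'a) \<Rightarrow> ('a \<Rightarrow> 'a \<Rightarrow> 'a) \<Rightarrow> (nat \<Rightarrow> 'a) \<Rightarrow> sterm \<Rightarrow> 'a" where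
  "eval add mul \<rho> (Var n) = \<rho> n"
| "eval add mul \<rho> (Plus s t) = add (eval add mul \<rho> s) (eval add mul \<rho> t)"
| "eval add mul \<rho> (Times s t) = mul (eval add mul \<rho> s) (eval add mul \<rho> t)"

definition satisfies :: "('a \<Rightarrow> 'a \<Rightarrow> 'a) \<Rightarrow> ('a \<Rightarrow> 'a \<Rightarrow> 'a) \<Rightarrow> sterm \<times> sterm \<Rightarrow> bool" where
  "satisfies add mul e \<longleftrightarrow> (\<forall>\<rho>. eval add mul \<rho> (fst e) = eval add mul \<rho> (snd e))"

datatype s4 = E1 | E2 | E3 | E4

fun s4_add :: "s4 \<Rightarrow> s4 \<Rightarrow> s4" where
  "s4_add E1 y = E1"
| "s4_add x E1 = E1"
| "s4_add E2 y = y"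
| "s4_add x E2 = x"
| "s4_add E3 E3 = E3"
| "s4_add E4 E4 = E4"
| "s4_add E3 E4 = E1"
| "s4_add E4 E3 = E1"

fun s4_mul :: "s4 \<Rightarrow> s4 \<Rightarrow> s4" where
  "s4_mul E2 E2 = E3"
| "s4_mul E2 E4 = E3"
| "s4_mul x y = E1"

text \<open>Equational theory Id(S) and the variety V(S) = Mod(Id(S)) (= HSP(S) by Birkhoff).\<close>
definition Id_S4 :: "(sterm \<times> sterm) set" where
  "Id_S4 = {e. satisfies s4_add s4_mul e}"

definition in_V_S4 :: "('a \<Rightarrow> 'a \<Rightarrow> 'a) \<Rightarrow> ('a \<Rightarrow> 'a \<Rightarrow> 'a) \<Rightarrow> bool" where
  "in_V_S4 add mul \<longleftrightarrow> (\<forall>e\<in>Id_S4. satisfies add mul e)"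

end

theory Submission
  imports Defs
begin

(* In any ai-semiring a term evaluates to the finite join of the values of its words, the
   nonempty sequences of variables it expands to.  In S_(4,411) the set {1,4} is prime for +,
   so evaluating an identity u = v of S_(4,411) under valuations into {2,3,4} (all 2; 4 at x
   and 2 elsewhere; 3 at x and 2 elsewhere) shows that v has a word of length at least 3 if u
   has one, a word x or xz if u has a word x or xy, and a word of length 2 containing x if u
   has one.  In a model of the five identities a word of length at least 3 absorbs everything
   (x1x2x3 >= x4), and otherwise these words of v bound each word of u in the semilattice
   order: x <= xz, xa <= x + ax, xy <= xz + ay and xy <= xz + yb.  So u <= v, and v <= u by
   symmetry. *)

fun words :: "sterm \<Rightarrow> nat list set" where
  "words (Var n) = {[n]}"
| "words (Plus s t) = words s \<union> words t"
| "words (Times s t) = (\<lambda>(v, w). v @ w) ` (words s \<times> words t)"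

lemma finite_words: "finite (words t)"
  by (induction t) auto

lemma words_nonempty: "words t \<noteq> {}"
  by (induction t) auto

lemma words_neq_Nil: "w \<in> words t \<Longrightarrow> w \<noteq> []"
  by (induction t arbitrary: w) auto

lemma word_cases [case_names single pair long]:
  assumes "w \<noteq> []"
  obtains a where "w = [a]" | a b where "w = [a, b]" | a b c r where "w = a # b # c # r"
  using assms by (metis list.exhaust)

fun vars :: "sterm \<Rightarrow> nat set" where
  "vars (Var n) = {n}"
| "vars (Plus s t) = vars s \<union> vars t"
| "vars (Times s t) = vars s \<union> vars t"

lemma eval_cong: "(\<And>n. n \<in> vars t \<Longrightarrow> \<rho> n = \<rho>' n) \<Longrightarrow> eval add mul \<rho> t = eval add mul \<rho>' t"
  by (induction t) auto

lemma satisfies_iff_4_vars: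
  assumes "vars u \<union> vars v \<subseteq> {..<4}"
  shows "satisfies add mul (u, v) \<longleftrightarrow>
    (\<forall>x1 x2 x3 x4. eval add mul ((!) [x1, x2, x3, x4]) u = eval add mul ((!) [x1, x2, x3, x4]) v)"
    (is "_ \<longleftrightarrow> (\<forall>x1 x2 x3 x4. ?eq [x1, x2, x3, x4])")
proof
  assume eq: "\<forall>x1 x2 x3 x4. ?eq [x1, x2, x3, x4]"
  have "eval add mul \<rho> u = eval add mul \<rho> v" for \<rho>
  proof -
    let ?\<rho>' = "(!) [\<rho> 0, \<rho> 1, \<rho> 2, \<rho> 3]"
    have "?\<rho>' n = \<rho> n" if "n < 4" for n
      using that by (auto simp: less_Suc_eq numeral_eq_Suc)
    then have "eval add mul \<rho> u = eval add mul ?\<rho>' u" and "eval add mul \<rho> v = eval add mul ?\<rho>' v"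
      using assms by (auto intro!: eval_cong)
    with eq show ?thesis
      by simp
  qed
  then show "satisfies add mul (u, v)"
    by (simp add: satisfies_def)
qed (simp add: satisfies_def)

fun eval_word :: "('a \<Rightarrow> 'a \<Rightarrow> 'a) \<Rightarrow> (nat \<Rightarrow> 'a) \<Rightarrow> nat list \<Rightarrow> 'a" where
  "eval_word mul \<rho> [x] = \<rho> x"
| "eval_word mul \<rho> (x # w) = mul (\<rho> x) (eval_word mul \<rho> w)"

lemma (in semigroup) eval_word_append:
  "v \<noteq> [] \<Longrightarrow> w \<noteq> [] \<Longrightarrow> eval_word f \<rho> (v @ w) = f (eval_word f \<rho> v) (eval_word f \<rho> w)"
proof (induction v)
  case (Cons x v)
  then show ?case by (cases v; cases w) (simp_all add: assoc)
qed simp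

lemma (in semilattice_set) F_mem_iff:
  assumes prime: "\<And>a b. f a b \<in> P \<longleftrightarrow> a \<in> P \<or> b \<in> P"
    and "finite A" "A \<noteq> {}"
  shows "F A \<in> P \<longleftrightarrow> (\<exists>a\<in>A. a \<in> P)"
  using assms(2,3) by (induction rule: finite_ne_induct) (simp_all add: prime)

locale idem_semiring = add: semilattice add + mul: semigroup mul
  for add mul :: "'a \<Rightarrow> 'a \<Rightarrow> 'a" +
  assumes distrib_left: "mul x (add y z) = add (mul x y) (mul x z)"
    and distrib_right: "mul (add x y) z = add (mul x z) (mul y z)"
begin

sublocale add: semilattice_set add by unfold_locales

lemma mul_F:
  assumes "finite A" "A \<noteq> {}" "finite B" "B \<noteq> {}"
  shows "mul (add.F A) (add.F B) = add.F ((\<lambda>(a, b). mul a b) ` (A \<times> B))"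
  using assms(1,2)
proof (induction rule: finite_ne_induct)
  case (singleton a)
  have "mul a (add.F B) = add.F (mul a ` B)"
    by (rule add.hom_commute[where h = "mul a", OF distrib_left assms(3,4)])
  moreover have "(\<lambda>(a, b). mul a b) ` ({a} \<times> B) = mul a ` B"
    by auto
  ultimately show ?case by simp
next
  case (insert a A)
  have "mul (add.F (insert a A)) (add.F B) = add (mul a (add.F B)) (mul (add.F A) (add.F B))"
    using insert by (simp add: distrib_right)
  also have "mul a (add.F B) = add.F (mul a ` B)"
    by (rule add.hom_commute[where h = "mul a", OF distrib_left assms(3,4)])
  also have "add (add.F (mul a ` B)) (mul (add.F A) (add.F B))
      = add.F (mul a ` B \<union> (\<lambda>(a, b). mul a b) ` (A \<times> B))"
    using insert assms(3,4) by (simp add: add.union)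
  also have "mul a ` B \<union> (\<lambda>(a, b). mul a b) ` (A \<times> B) = (\<lambda>(a, b). mul a b) ` (insert a A \<times> B)"
    by auto
  finally show ?case .
qed

lemma eval_eq_F_words: "eval add mul \<rho> t = add.F (eval_word mul \<rho> ` words t)"
proof (induction t)
  case (Plus s t)
  then show ?case
    by (simp add: image_Un add.union finite_words words_nonempty)
next
  case (Times s t)
  have "eval_word mul \<rho> ` words (Times s t)
      = (\<lambda>(v, w). mul (eval_word mul \<rho> v) (eval_word mul \<rho> w)) ` (words s \<times> words t)"
    unfolding words.simps image_image
    by (rule image_cong) (auto intro!: mul.eval_word_append dest: words_neq_Nil)
  also have "\<dots> = (\<lambda>(a, b). mul a b) ` (eval_word mul \<rho> ` words s \<times> eval_word mul \<rho> ` words t)"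
    by (auto simp: image_iff)
  finally show ?case
    using Times by (simp add: mul_F finite_words words_nonempty)
qed simp

definition le :: "'a \<Rightarrow> 'a \<Rightarrow> bool" where
  "le a b \<longleftrightarrow> add a b = b"

lemma le_refl: "le a a"
  by (simp add: le_def)

lemma le_trans: "le a b \<Longrightarrow> le b c \<Longrightarrow> le a c"
  unfolding le_def by (metis add.assoc)

lemma le_antisym: "le a b \<Longrightarrow> le b a \<Longrightarrow> a = b"
  unfolding le_def by (metis add.commute)

lemma add_le_iff: "le (add a b) c \<longleftrightarrow> le a c \<and> le b c"
  unfolding le_def by (metis add.assoc add.commute add.left_idem)

lemma F_le_iff: "finite A \<Longrightarrow> A \<noteq> {} \<Longrightarrow> le (add.F A) c \<longleftrightarrow> (\<forall>a\<in>A. le a c)"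
  by (induction rule: finite_ne_induct) (simp_all add: add_le_iff)

lemma eval_le_iff: "le (eval add mul \<rho> t) c \<longleftrightarrow> (\<forall>w\<in>words t. le (eval_word mul \<rho> w) c)"
  by (simp add: eval_eq_F_words F_le_iff finite_words words_nonempty)

lemma word_le_eval: "w \<in> words t \<Longrightarrow> le (eval_word mul \<rho> w) (eval add mul \<rho> t)"
  using eval_le_iff le_refl by blast

end

lemma ai_semiring_iff_idem_semiring: "ai_semiring add mul \<longleftrightarrow> idem_semiring add mul"
  unfolding ai_semiring_def idem_semiring_def idem_semiring_axioms_def semilattice_def
    abel_semigroup_def abel_semigroup_axioms_def semigroup_def semilattice_axioms_def
  by blast

lemma s4_all: "(\<forall>x. P x) \<longleftrightarrow> P E1 \<and> P E2 \<and> P E3 \<and> P E4"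
  by (metis s4.exhaust)

lemma S4_satisfies_identities:
  "ai_semiring s4_add s4_mul \<and>
    (\<forall>x y. s4_mul x y = s4_add (s4_mul x y) x) \<and>
    (\<forall>x y. s4_add x (s4_mul y x) = s4_add (s4_add x (s4_mul y x)) (s4_mul x y)) \<and>
    (\<forall>x1 x2 x3 x4. s4_mul (s4_mul x1 x2) x3 = s4_add (s4_mul (s4_mul x1 x2) x3) x4) \<and>
    (\<forall>x1 x2 x3 x4. s4_add (s4_mul x1 x2) (s4_mul x3 x4) = s4_add (s4_add (s4_mul x1 x2) (s4_mul x3 x4)) (s4_mul x1 x3)) \<and>
    (\<forall>x1 x2 x3 x4. s4_add (s4_mul x1 x2) (s4_mul x3 x4) = s4_add (s4_add (s4_mul x1 x2) (s4_mul x3 x4)) (s4_mul x1 x4))"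
  by (simp add: ai_semiring_def s4_all)

interpretation s4: idem_semiring s4_add s4_mul
  using S4_satisfies_identities ai_semiring_iff_idem_semiring by blast

lemma s4_add_mem_E1E4_iff: "s4_add a b \<in> {E1, E4} \<longleftrightarrow> a \<in> {E1, E4} \<or> b \<in> {E1, E4}"
  by (cases a; cases b) simp_all

lemma s4_eval_mem_E1E4_iff:
  "eval s4_add s4_mul \<sigma> t \<in> {E1, E4} \<longleftrightarrow> (\<exists>w\<in>words t. eval_word s4_mul \<sigma> w \<in> {E1, E4})"
  unfolding s4.eval_eq_F_words
  using s4.add.F_mem_iff[OF s4_add_mem_E1E4_iff, of "eval_word s4_mul \<sigma> ` words t"]
  by (simp add: finite_words words_nonempty)

lemma s4_mul_mul: "s4_mul x (s4_mul y z) = E1"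
  by (cases x; cases y; cases z) simp_all

lemma s4_eval_const_E2:
  "eval s4_add s4_mul (\<lambda>_. E2) t \<in> {E1, E4} \<longleftrightarrow> (\<exists>w\<in>words t. 3 \<le> length w)"
  unfolding s4_eval_mem_E1E4_iff
proof (intro bex_cong refl)
  show "eval_word s4_mul (\<lambda>_. E2) w \<in> {E1, E4} \<longleftrightarrow> 3 \<le> length w" if "w \<in> words t" for w
    using words_neq_Nil[OF that] by (cases w rule: word_cases) (simp_all add: s4_mul_mul)
qed

lemma s4_eval_E4_at:
  "eval s4_add s4_mul (\<lambda>n. if n = x then E4 else E2) t \<in> {E1, E4} \<longleftrightarrow>
    (\<exists>w\<in>words t. 3 \<le> length w \<or> w = [x] \<or> (\<exists>b. w = [x, b]))"
  unfolding s4_eval_mem_E1E4_iff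
proof (intro bex_cong refl)
  show "eval_word s4_mul (\<lambda>n. if n = x then E4 else E2) w \<in> {E1, E4} \<longleftrightarrow>
      3 \<le> length w \<or> w = [x] \<or> (\<exists>b. w = [x, b])" if "w \<in> words t" for w
    using words_neq_Nil[OF that] by (cases w rule: word_cases) (simp_all add: s4_mul_mul)
qed

lemma s4_eval_E3_at:
  "eval s4_add s4_mul (\<lambda>n. if n = x then E3 else E2) t \<in> {E1, E4} \<longleftrightarrow>
    (\<exists>w\<in>words t. 3 \<le> length w \<or> (\<exists>a. w = [a, x]) \<or> (\<exists>b. w = [x, b]))"
  unfolding s4_eval_mem_E1E4_iff
proof (intro bex_cong refl)
  show "eval_word s4_mul (\<lambda>n. if n = x then E3 else E2) w \<in> {E1, E4} \<longleftrightarrow>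
      3 \<le> length w \<or> (\<exists>a. w = [a, x]) \<or> (\<exists>b. w = [x, b])" if "w \<in> words t" for w
    using words_neq_Nil[OF that] by (cases w rule: word_cases) (simp_all add: s4_mul_mul)
qed

locale S4_basis_model = idem_semiring +
  assumes mul_absorbs_left_factor: "mul x y = add (mul x y) x"
    and add_mul_swap: "add x (mul y x) = add (add x (mul y x)) (mul x y)"
    and mul3_absorbs: "mul (mul x1 x2) x3 = add (mul (mul x1 x2) x3) x4"
    and add_mul_fst_fst: "add (mul x1 x2) (mul x3 x4) = add (add (mul x1 x2) (mul x3 x4)) (mul x1 x3)"
    and add_mul_fst_snd: "add (mul x1 x2) (mul x3 x4) = add (add (mul x1 x2) (mul x3 x4)) (mul x1 x4)"
begin

lemma le_mul: "le x (mul x y)"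
  unfolding le_def by (metis mul_absorbs_left_factor add.commute)

lemma mul_le_add_mul_swap: "le (mul x y) (add x (mul y x))"
  unfolding le_def by (metis add_mul_swap add.commute)

lemma le_mul3: "le z (mul (mul a b) c)"
  unfolding le_def by (metis mul3_absorbs add.commute)

lemma mul_fst_fst_le: "le (mul a c) (add (mul a b) (mul c d))"
  unfolding le_def by (metis add_mul_fst_fst add.commute)

lemma mul_fst_snd_le: "le (mul a d) (add (mul a b) (mul c d))"
  unfolding le_def by (metis add_mul_fst_snd add.commute)

lemma le_eval_if_long_word:
  assumes "w \<in> words t" and "3 \<le> length w"
  shows "le z (eval add mul \<rho> t)"
proof -
  obtain a b c r where w: "w = a # b # c # r"
    using assms(2) by (metis Suc_le_length_iff numeral_3_eq_3)
  have "eval_word mul \<rho> w = mul (mul (\<rho> a) (\<rho> b)) (eval_word mul \<rho> (c # r))"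
    by (simp add: w mul.assoc)
  then show ?thesis
    using le_mul3 word_le_eval[OF assms(1)] le_trans by metis
qed

lemma mul_le_if_swapped_le: "le x V \<Longrightarrow> le (mul a x) V \<Longrightarrow> le (mul x a) V"
  using mul_le_add_mul_swap add_le_iff le_trans by blast

lemma mul_le_if_factors_le:
  assumes "le (mul x z) V" and "le (mul a y) V \<or> le (mul y b) V"
  shows "le (mul x y) V"
  using assms mul_fst_fst_le mul_fst_snd_le add_le_iff le_trans by blast

lemma letter_le_eval: "[x] \<in> words t \<Longrightarrow> le (\<rho> x) (eval add mul \<rho> t)"
  using word_le_eval by fastforce

lemma pair_le_eval: "[x, y] \<in> words t \<Longrightarrow> le (mul (\<rho> x) (\<rho> y)) (eval add mul \<rho> t)"
  using word_le_eval by fastforce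

lemma ex_mul_le_eval:
  assumes "\<exists>w\<in>words v. w = [x] \<or> (\<exists>z. w = [x, z])"
    and "\<exists>w\<in>words v. (\<exists>a. w = [a, x]) \<or> (\<exists>b. w = [x, b])"
  shows "\<exists>z. le (mul (\<rho> x) (\<rho> z)) (eval add mul \<rho> v)"
  using assms letter_le_eval[of x v \<rho>] pair_le_eval[of _ _ v \<rho>] mul_le_if_swapped_le by blast

lemma word_le_eval_if_S4_identity:
  assumes S4: "satisfies s4_add s4_mul (u, v)" and w: "w \<in> words u"
  shows "le (eval_word mul \<rho> w) (eval add mul \<rho> v)"
proof (cases "\<exists>w'\<in>words v. 3 \<le> length w'")
  case True
  then show ?thesis using le_eval_if_long_word by blast
next
  case no_long: False
  have transfer: "eval s4_add s4_mul \<sigma> u \<in> {E1, E4} \<Longrightarrow> eval s4_add s4_mul \<sigma> v \<in> {E1, E4}" for \<sigma>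
    using S4 by (simp add: satisfies_def)
  have E4_at: "\<exists>w'\<in>words v. w' = [x] \<or> (\<exists>b. w' = [x, b])"
    if "w = [x] \<or> (\<exists>b. w = [x, b])" for x
    using transfer[of "\<lambda>n. if n = x then E4 else E2", unfolded s4_eval_E4_at] that w no_long
    by blast
  have E3_at: "\<exists>w'\<in>words v. (\<exists>a. w' = [a, x]) \<or> (\<exists>b. w' = [x, b])"
    if "(\<exists>a. w = [a, x]) \<or> (\<exists>b. w = [x, b])" for x
    using transfer[of "\<lambda>n. if n = x then E3 else E2", unfolded s4_eval_E3_at] that w no_long
    by blast
  from words_neq_Nil[OF w] show ?thesis
  proof (cases w rule: word_cases)
    case (single x)
    then show ?thesis
      using E4_at[of x] letter_le_eval[of x v \<rho>] pair_le_eval[of x _ v \<rho>] le_mul le_trans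
      by fastforce
  next
    case (pair x y)
    obtain z where "le (mul (\<rho> x) (\<rho> z)) (eval add mul \<rho> v)"
      using ex_mul_le_eval E4_at[of x] E3_at[of x] pair by blast
    moreover have "\<exists>w'\<in>words v. (\<exists>a. w' = [a, y]) \<or> (\<exists>b. w' = [y, b])"
      using E3_at[of y] pair by blast
    then obtain a b where "[a, y] \<in> words v \<or> [y, b] \<in> words v"
      by blast
    then have "le (mul (\<rho> a) (\<rho> y)) (eval add mul \<rho> v) \<or>
        le (mul (\<rho> y) (\<rho> b)) (eval add mul \<rho> v)"
      using pair_le_eval by blast
    ultimately have "le (mul (\<rho> x) (\<rho> y)) (eval add mul \<rho> v)"
      by (rule mul_le_if_factors_le)
    then show ?thesis
      using pair by simp
  next
    case long
    then have "eval s4_add s4_mul (\<lambda>_. E2) u \<in> {E1, E4}"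
      using s4_eval_const_E2 w by force
    then show ?thesis
      using transfer s4_eval_const_E2 no_long by blast
  qed
qed

lemma eval_le_if_S4_identity:
  "satisfies s4_add s4_mul (u, v) \<Longrightarrow> le (eval add mul \<rho> u) (eval add mul \<rho> v)"
  unfolding eval_le_iff using word_le_eval_if_S4_identity by blast

lemma satisfies_if_S4_identity:
  assumes "satisfies s4_add s4_mul (u, v)"
  shows "satisfies add mul (u, v)"
proof -
  have "satisfies s4_add s4_mul (v, u)"
    using assms by (simp add: satisfies_def)
  with assms show ?thesis
    using eval_le_if_S4_identity le_antisym by (simp add: satisfies_def[of add mul])
qed

end

definition S4_basis :: "(sterm \<times> sterm) list" where
  "S4_basis =
    [(Plus (Plus (Var 0) (Var 1)) (Var 2), Plus (Var 0) (Plus (Var 1) (Var 2))),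
     (Plus (Var 0) (Var 1), Plus (Var 1) (Var 0)),
     (Plus (Var 0) (Var 0), Var 0),
     (Times (Times (Var 0) (Var 1)) (Var 2), Times (Var 0) (Times (Var 1) (Var 2))),
     (Times (Var 0) (Plus (Var 1) (Var 2)), Plus (Times (Var 0) (Var 1)) (Times (Var 0) (Var 2))),
     (Times (Plus (Var 0) (Var 1)) (Var 2), Plus (Times (Var 0) (Var 2)) (Times (Var 1) (Var 2))),
     (Times (Var 0) (Var 1), Plus (Times (Var 0) (Var 1)) (Var 0)),
     (Plus (Var 0) (Times (Var 1) (Var 0)),
      Plus (Plus (Var 0) (Times (Var 1) (Var 0))) (Times (Var 0) (Var 1))),
     (Times (Times (Var 0) (Var 1)) (Var 2), Plus (Times (Times (Var 0) (Var 1)) (Var 2)) (Var 3)),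
     (Plus (Times (Var 0) (Var 1)) (Times (Var 2) (Var 3)),
      Plus (Plus (Times (Var 0) (Var 1)) (Times (Var 2) (Var 3))) (Times (Var 0) (Var 2))),
     (Plus (Times (Var 0) (Var 1)) (Times (Var 2) (Var 3)),
      Plus (Plus (Times (Var 0) (Var 1)) (Times (Var 2) (Var 3))) (Times (Var 0) (Var 3)))]"

lemma satisfies_S4_basis_iff:
  "(\<forall>e\<in>set S4_basis. satisfies add mul e) \<longleftrightarrow>
    ai_semiring add mul \<and>
    (\<forall>x y. mul x y = add (mul x y) x) \<and>
    (\<forall>x y. add x (mul y x) = add (add x (mul y x)) (mul x y)) \<and>
    (\<forall>x1 x2 x3 x4. mul (mul x1 x2) x3 = add (mul (mul x1 x2) x3) x4) \<and>
    (\<forall>x1 x2 x3 x4. add (mul x1 x2) (mul x3 x4) = add (add (mul x1 x2) (mul x3 x4)) (mul x1 x3)) \<and>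
    (\<forall>x1 x2 x3 x4. add (mul x1 x2) (mul x3 x4) = add (add (mul x1 x2) (mul x3 x4)) (mul x1 x4))"
  by (simp add: S4_basis_def satisfies_iff_4_vars ai_semiring_def)

lemma S4_basis_sound: "set S4_basis \<subseteq> Id_S4"
  using satisfies_S4_basis_iff[THEN iffD2, OF S4_satisfies_identities]
  unfolding Id_S4_def by blast

lemma S4_basis_complete:
  assumes "\<forall>e\<in>set S4_basis. satisfies add mul e" and "e \<in> Id_S4"
  shows "satisfies add mul e"
proof -
  have "S4_basis_model add mul"
    using assms(1)
    unfolding satisfies_S4_basis_iff ai_semiring_iff_idem_semiring
      S4_basis_model_def S4_basis_model_axioms_def
    by blast
  then interpret S4_basis_model add mul .
  obtain u v where "e = (u, v)"
    by (cases e)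
  with assms(2) show ?thesis
    unfolding Id_S4_def by (simp add: satisfies_if_S4_identity)
qed

theorem proposition5p2:
  fixes add mul :: "'a \<Rightarrow> 'a \<Rightarrow> 'a"
  shows "in_V_S4 add mul \<longleftrightarrow>
    ai_semiring add mul \<and>
    (\<forall>x y. mul x y = add (mul x y) x) \<and>
    (\<forall>x y. add x (mul y x) = add (add x (mul y x)) (mul x y)) \<and>
    (\<forall>x1 x2 x3 x4. mul (mul x1 x2) x3 = add (mul (mul x1 x2) x3) x4) \<and>
    (\<forall>x1 x2 x3 x4. add (mul x1 x2) (mul x3 x4) = add (add (mul x1 x2) (mul x3 x4)) (mul x1 x3)) \<and>
    (\<forall>x1 x2 x3 x4. add (mul x1 x2) (mul x3 x4) = add (add (mul x1 x2) (mul x3 x4)) (mul x1 x4))"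
proof -
  have "in_V_S4 add mul \<longleftrightarrow> (\<forall>e\<in>set S4_basis. satisfies add mul e)"
    unfolding in_V_S4_def using S4_basis_sound S4_basis_complete by blast
  then show ?thesis
    by (simp only: satisfies_S4_basis_iff)
qed

end
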